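(* Let $\mathcal O$ be a non-degenerate conic of $\mathrm{PG}(2,q^2)$ and $\bar L\in\ell_\infty$ a point not on $\mathcal O$. Then in $\mathrm{PG}(4,q^2)$ the extended spread line $[L]^\star$ is disjoint from $[\mathcal O]^\star=\mathcal Q_\infty^\star\cap\mathcal Q_0^\star$.
   Context: Bruck–Bose setting with coordinates: $\tau$ primitive in $\mathbb F_{q^2}$ with minimal polynomial $x^2-t_1x-t_0$ over $\mathbb F_q$; $\ell_\infty: z=0$ in $\mathrm{PG}(2,q^2)$; $\Sigma_\infty: z=0$ in $\mathrm{PG}(4,q)$ with coordinates $(x_0,x_1,y_0,y_1,z)$. The affine point $(x_0+x_1\tau,y_0+y_1\tau,z)$ maps to $(x_0,x_1,y_0,y_1,z)$, and $\bar T=(\delta,1,0)\in\ell_\infty$, $\delta=d_0+d_1\tau$, to the spread line $[T]=\langle(d_0,d_1,1,0,0),(t_0d_1,d_0+t_1d_1,0,1,0)\rangle$ (and $(1,0,0)$ to $\langle(1,0,0,0,0),(0,1,0,0,0)\rangle$). If $\mathcal O$ has equation $f(x,y,z)=0$, substituting $x=x_0+x_1\tau$, $y=y_0+y_1\tau$ and reducing with $\tau^2=t_1\tau+t_0$ gives $f=f_\infty+\tau f_0$ with $f_\infty,f_0$ homogeneous quadratics over $\mathbb F_q$; $\mathcal Q_\infty,\mathcal Q_0$ are the quadrics $f_\infty=0$, $f_0=0$ of $\mathrm{PG}(4,q)$, and $\mathcal V^\star$ denotes the set of points of $\mathrm{PG}(4,q^2)$ satisfying the equations defining $\mathcal V$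 (for a line, its extension to a line of $\mathrm{PG}(4,q^2)$). *)

theory Defs
  imports Main
begin

type_synonym 'k conic = "'k \<times> 'k \<times> 'k \<times> 'k \<times> 'k \<times> 'k"

definition conic_eval :: "'k::field conic \<Rightarrow> 'k \<Rightarrow> 'k \<Rightarrow> 'k \<Rightarrow> 'k" where
  "conic_eval C x y z = (case C of (a,b,c,d,e,g) \<Rightarrow>
     a*x^2 + b*y^2 + c*z^2 + d*x*y + e*x*z + g*y*z)"

definition nondegenerate_conic :: "'k::field conic \<Rightarrow> bool" where
  "nondegenerate_conic C = (case C of (a,b,c,d,e,g) \<Rightarrow>
     \<not> (\<exists>x y z. (x,y,z) \<noteq> (0,0,0) \<and> conic_eval C x y z = 0 \<and>
          2*a*x + d*y + e*z = 0 \<and> 2*b*y + d*x + g*z = 0 \<and> 2*c*z + e*x + g*y = 0))"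

definition is_subfield :: "'k::field set \<Rightarrow> bool" where
  "is_subfield F = (0 \<in> F \<and> 1 \<in> F \<and> (\<forall>x\<in>F. \<forall>y\<in>F. x + y \<in> F \<and> x * y \<in> F) \<and>
     (\<forall>x\<in>F. - x \<in> F \<and> inverse x \<in> F))"

definition bcoords :: "'k::field set \<Rightarrow> 'k \<Rightarrow> 'k \<Rightarrow> 'k \<times> 'k" where
  "bcoords Fq \<tau> c = (THE p. fst p \<in> Fq \<and> snd p \<in> Fq \<and> c = fst p + snd p * \<tau>)"

text \<open>Formal arithmetic in R[tau]/(tau^2 - t1 tau - t0), with R = 'k (so the
  resulting polynomials can be evaluated at points of PG(4,q^2)).
  A pair (u,w) stands for u + w tau.\<close>

definition tadd :: "'k::field \<times> 'k \<Rightarrow> 'k \<times> 'k \<Rightarrow> 'k \<times> 'k" where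
  "tadd p r = (fst p + fst r, snd p + snd r)"

definition tmul :: "'k::field \<Rightarrow> 'k \<Rightarrow> 'k \<times> 'k \<Rightarrow> 'k \<times> 'k \<Rightarrow> 'k \<times> 'k" where
  "tmul t0 t1 p r = (fst p * fst r + t0 * snd p * snd r,
                     fst p * snd r + snd p * fst r + t1 * snd p * snd r)"

text \<open>Substituting x = x0 + x1 tau, y = y0 + y1 tau, z into f and reducing with
  tau^2 = t1 tau + t0 gives f = f_inf + tau f_0; bb_split returns (f_inf, f_0)
  evaluated at (x0,x1,y0,y1,z).\<close>

definition bb_split :: "'k::field set \<Rightarrow> 'k \<Rightarrow> 'k \<Rightarrow> 'k \<Rightarrow> 'k conic
     \<Rightarrow> 'k \<times> 'k \<times> 'k \<times> 'k \<times> 'k \<Rightarrow> 'k \<times> 'k" where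
  "bb_split Fq \<tau> t0 t1 C P = (case C of (a,b,c,d,e,g) \<Rightarrow> case P of (x0,x1,y0,y1,z) \<Rightarrow>
     let X = (x0,x1); Y = (y0,y1); Z = (z,0);
         m = tmul t0 t1; k = bcoords Fq \<tau>;
         mon = (\<lambda>co U V. m (k co) (m U V))
     in tadd (mon a X X) (tadd (mon b Y Y) (tadd (mon c Z Z)
          (tadd (mon d X Y) (tadd (mon e X Z) (mon g Y Z))))))"

definition f_inf where "f_inf Fq \<tau> t0 t1 C P = fst (bb_split Fq \<tau> t0 t1 C P)"
definition f_0 where "f_0 Fq \<tau> t0 t1 C P = snd (bb_split Fq \<tau> t0 t1 C P)"

text \<open>Spread line [L] of the point L = (l1,l2,0) of l_inf, given by two spanning
  vectors over GF(q).\<close>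

definition spread_gens :: "'k::field set \<Rightarrow> 'k \<Rightarrow> 'k \<Rightarrow> 'k \<Rightarrow> 'k \<Rightarrow> 'k
    \<Rightarrow> ('k \<times> 'k \<times> 'k \<times> 'k \<times> 'k) \<times> ('k \<times> 'k \<times> 'k \<times> 'k \<times> 'k)" where
  "spread_gens Fq \<tau> t0 t1 l1 l2 =
     (if l2 = 0 then ((1,0,0,0,0), (0,1,0,0,0))
      else (case bcoords Fq \<tau> (l1 / l2) of (d0,d1) \<Rightarrow>
              ((d0,d1,1,0,0), (t0*d1, d0 + t1*d1, 0, 1, 0))))"

text \<open>Extended spread line [L]^*: nonzero vectors of the GF(q^2)-span of the generators
  (representatives of the points of the extended line in PG(4,q^2)).\<close>

definition ext_spread_line :: "'k::field set \<Rightarrow> 'k \<Rightarrow> 'k \<Rightarrow> 'k \<Rightarrow> 'k \<Rightarrow> 'k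
    \<Rightarrow> ('k \<times> 'k \<times> 'k \<times> 'k \<times> 'k) set" where
  "ext_spread_line Fq \<tau> t0 t1 l1 l2 = (case spread_gens Fq \<tau> t0 t1 l1 l2 of
     ((u0,u1,u2,u3,u4),(w0,w1,w2,w3,w4)) \<Rightarrow>
       {(s*u0+r*w0, s*u1+r*w1, s*u2+r*w2, s*u3+r*w3, s*u4+r*w4) | s r. True}
       - {(0,0,0,0,0)})"

end

theory Submission
  imports Defs
begin

text \<open>For each root \<rho> of x^2 - t1 x - t0, the map u + w \<tau> \<mapsto> u + \<rho> w is a ring
  homomorphism, so f_inf + \<rho> f_0 is the conic with correspondingly mapped coefficients,
  evaluated at (x0 + \<rho> x1, y0 + \<rho> y1, z). On a point s u + r w of [L]^* this value is
  (s + \<rho> r)^2 times its value at the generator u. For \<rho> = \<tau> the value at u is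
  f(\<delta>,1,0) (resp. f(1,0,0)), nonzero as L is not on the conic; since u has GF(q)-coordinates,
  the value for the conjugate root t1 - \<tau> is nonzero as well. A common zero of f_inf and
  f_0 would thus force s + \<tau> r = 0 = s + (t1 - \<tau>) r, i.e. \<tau> = t1 - \<tau>, impossible because
  the minimal polynomial of \<tau> is separable.\<close>

lemma subfield_power: "is_subfield F \<Longrightarrow> x \<in> F \<Longrightarrow> x ^ n \<in> F"
  by (induction n) (auto simp: is_subfield_def)

lemma subfield_diff: "is_subfield F \<Longrightarrow> x \<in> F \<Longrightarrow> y \<in> F \<Longrightarrow> x - y \<in> F"
  unfolding is_subfield_def by (metis diff_conv_add_uminus)

lemma subfield_divide: "is_subfield F \<Longrightarrow> x \<in> F \<Longrightarrow> y \<in> F \<Longrightarrow> x / y \<in> F"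
  unfolding is_subfield_def by (metis divide_inverse)

lemma subfield_square_char_2:
  fixes F :: "'k::field set"
  assumes F: "is_subfield F" "finite F" and char2: "(2::'k) = 0" and c: "c \<in> F"
  obtains x where "x \<in> F" "x ^ 2 = c"
proof -
  have frobenius: "(x - y) ^ 2 = x ^ 2 - y ^ 2" for x y :: 'k
  proof -
    have "(x - y) ^ 2 = x ^ 2 - y ^ 2 - 2 * y * (x - y)"
      by (simp add: algebra_simps power2_eq_square)
    moreover have "2 * y * (x - y) = 0" by (simp only: char2 mult_zero_left)
    ultimately show ?thesis by simp
  qed
  have "inj_on (\<lambda>x. x ^ 2) F"
  proof (rule inj_onI)
    fix x y :: 'k assume "x ^ 2 = y ^ 2"
    hence "(x - y) ^ 2 = 0" by (simp add: frobenius)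
    thus "x = y" by simp
  qed
  moreover have "(\<lambda>x. x ^ 2) ` F \<subseteq> F" using subfield_power[OF F(1)] by auto
  ultimately have "(\<lambda>x. x ^ 2) ` F = F" using endo_inj_surj[OF F(2)] by blast
  thus ?thesis using c that by (metis imageE)
qed

lemma primitive_element_not_in_subfield:
  fixes F :: "'k::{field,finite} set"
  assumes F: "is_subfield F" and card: "card (UNIV :: 'k set) = card F ^ 2"
    and primitive: "\<forall>x::'k. x \<noteq> 0 \<longrightarrow> (\<exists>n::nat. x = \<tau> ^ n)"
  shows "\<tau> \<notin> F"
proof
  assume "\<tau> \<in> F"
  have "x \<in> F" for x
    using primitive subfield_power[OF F \<open>\<tau> \<in> F\<close>] F by (cases "x = 0") (auto simp: is_subfield_def)
  hence "F = UNIV" by blast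
  with card have "card F * card F = card F * 1" by (simp add: power2_eq_square)
  moreover have "card {0, 1::'k} \<le> card F"
    using F by (intro card_mono) (auto simp: is_subfield_def)
  ultimately show False by (simp del: mult_cancel_left1 mult_cancel_right1)
qed

definition teval :: "'k::field \<Rightarrow> 'k \<times> 'k \<Rightarrow> 'k" where
  "teval \<rho> p = fst p + \<rho> * snd p"

lemma teval_tadd: "teval \<rho> (tadd p r) = teval \<rho> p + teval \<rho> r"
  by (simp add: teval_def tadd_def algebra_simps)

lemma teval_tmul:
  assumes "\<rho> ^ 2 = t1 * \<rho> + t0"
  shows "teval \<rho> (tmul t0 t1 p r) = teval \<rho> p * teval \<rho> r"
proof -
  have "teval \<rho> p * teval \<rho> r
      = fst p * fst r + \<rho> * (fst p * snd r + snd p * fst r) + \<rho> ^ 2 * snd p * snd r"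
    by (simp add: teval_def algebra_simps power2_eq_square)
  also have "\<dots> = teval \<rho> (tmul t0 t1 p r)"
    unfolding assms by (simp add: teval_def tmul_def algebra_simps)
  finally show ?thesis by simp
qed

lemma conjugate_root:
  fixes \<rho> :: "'a::comm_ring_1"
  assumes "\<rho> ^ 2 = t1 * \<rho> + t0"
  shows "(t1 - \<rho>) ^ 2 = t1 * (t1 - \<rho>) + t0"
proof -
  have "(t1 - \<rho>) ^ 2 = t1 * t1 - 2 * t1 * \<rho> + \<rho> ^ 2"
    by (simp add: algebra_simps power2_eq_square)
  thus ?thesis unfolding assms by (simp add: algebra_simps)
qed

definition map_conic :: "('k \<Rightarrow> 'k) \<Rightarrow> 'k conic \<Rightarrow> 'k conic" where
  "map_conic h C = (case C of (a, b, c, d, e, g) \<Rightarrow> (h a, h b, h c, h d, h e, h g))"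

lemma conic_eval_homogeneous:
  "conic_eval C (m * x) (m * y) (m * z) = m ^ 2 * conic_eval C x y z"
  by (cases C) (simp add: conic_eval_def algebra_simps power2_eq_square)

text \<open>For \<rho> = \<tau> this recovers f, for the conjugate root its conjugate.\<close>

definition bb_recombine ::
    "'k::field set \<Rightarrow> 'k \<Rightarrow> 'k \<Rightarrow> 'k \<Rightarrow> 'k conic \<Rightarrow> 'k \<Rightarrow> 'k \<times> 'k \<times> 'k \<times> 'k \<times> 'k \<Rightarrow> 'k" where
  "bb_recombine Fq \<tau> t0 t1 C \<rho> P = f_inf Fq \<tau> t0 t1 C P + \<rho> * f_0 Fq \<tau> t0 t1 C P"

lemma bb_recombine_conic_eval:
  assumes "\<rho> ^ 2 = t1 * \<rho> + t0"
  shows "bb_recombine Fq \<tau> t0 t1 C \<rho> (x0, x1, y0, y1, z)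
    = conic_eval (map_conic (\<lambda>co. teval \<rho> (bcoords Fq \<tau> co)) C) (x0 + \<rho> * x1) (y0 + \<rho> * y1) z"
proof -
  obtain a b c d e g where C: "C = (a, b, c, d, e, g)" by (cases C) auto
  have "bb_recombine Fq \<tau> t0 t1 C \<rho> (x0, x1, y0, y1, z)
      = teval \<rho> (bb_split Fq \<tau> t0 t1 C (x0, x1, y0, y1, z))"
    by (simp add: bb_recombine_def f_inf_def f_0_def teval_def)
  also have "\<dots> = conic_eval (map_conic (\<lambda>co. teval \<rho> (bcoords Fq \<tau> co)) C)
                    (x0 + \<rho> * x1) (y0 + \<rho> * y1) z"
    unfolding C bb_split_def Let_def
    by (simp only: teval_tadd teval_tmul[OF assms] split prod.case)
       (simp add: teval_def conic_eval_def map_conic_def algebra_simps power2_eq_square)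
  finally show ?thesis .
qed

lemma bb_recombine_scale:
  assumes "\<rho> ^ 2 = t1 * \<rho> + t0"
    and "x0 + \<rho> * x1 = m * (u0 + \<rho> * u1)" "y0 + \<rho> * y1 = m * (v0 + \<rho> * v1)" "z = m * w"
  shows "bb_recombine Fq \<tau> t0 t1 C \<rho> (x0, x1, y0, y1, z)
       = m ^ 2 * bb_recombine Fq \<tau> t0 t1 C \<rho> (u0, u1, v0, v1, w)"
  unfolding bb_recombine_conic_eval[OF assms(1)] assms(2-4) conic_eval_homogeneous ..

lemma bb_recombine_ext_spread_line:
  assumes "P \<in> ext_spread_line Fq \<tau> t0 t1 l1 l2"
  obtains s r where "(s, r) \<noteq> (0, 0)"
    and "\<And>\<rho>. \<rho> ^ 2 = t1 * \<rho> + t0 \<Longrightarrow> bb_recombine Fq \<tau> t0 t1 C \<rho> P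
           = (s + \<rho> * r) ^ 2 * bb_recombine Fq \<tau> t0 t1 C \<rho> (fst (spread_gens Fq \<tau> t0 t1 l1 l2))"
proof (cases "l2 = 0")
  case True
  with assms obtain s r where P: "P = (s, r, 0, 0, 0)" "P \<noteq> (0, 0, 0, 0, 0)"
    unfolding ext_spread_line_def spread_gens_def by auto
  hence "(s, r) \<noteq> (0, 0)" by auto
  show ?thesis
    by (rule that[OF \<open>(s, r) \<noteq> (0, 0)\<close>]) (simp add: P(1) True spread_gens_def bb_recombine_scale)
next
  case False
  obtain d0 d1 where d: "bcoords Fq \<tau> (l1 / l2) = (d0, d1)" by fastforce
  have "P \<in> {(s * d0 + r * (t0 * d1), s * d1 + r * (d0 + t1 * d1), s, r, 0) | s r. True}
      - {(0, 0, 0, 0, 0)}"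
    using assms False d unfolding ext_spread_line_def spread_gens_def by simp
  then obtain s r where P: "P = (s * d0 + r * (t0 * d1), s * d1 + r * (d0 + t1 * d1), s, r, 0)"
      and "P \<noteq> (0, 0, 0, 0, 0)"
    by blast
  hence "(s, r) \<noteq> (0, 0)" by auto
  show ?thesis
  proof (rule that[OF \<open>(s, r) \<noteq> (0, 0)\<close>])
    fix \<rho> assume root: "\<rho> ^ 2 = t1 * \<rho> + t0"
    have "s * d0 + r * (t0 * d1) + \<rho> * (s * d1 + r * (d0 + t1 * d1))
        = s * d0 + \<rho> * s * d1 + \<rho> * r * d0 + \<rho> ^ 2 * r * d1"
      unfolding root by (simp add: algebra_simps)
    also have "\<dots> = (s + \<rho> * r) * (d0 + \<rho> * d1)"
      by (simp add: algebra_simps power2_eq_square)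
    finally show "bb_recombine Fq \<tau> t0 t1 C \<rho> P
        = (s + \<rho> * r) ^ 2 * bb_recombine Fq \<tau> t0 t1 C \<rho> (fst (spread_gens Fq \<tau> t0 t1 l1 l2))"
      by (simp add: P(1) False d spread_gens_def bb_recombine_scale[OF root])
  qed
qed

locale quadratic_subfield =
  fixes Fq :: "'k::{field,finite} set" and \<tau> t0 t1 :: 'k
  assumes subfield: "is_subfield Fq"
    and card_square: "card (UNIV :: 'k set) = card Fq ^ 2"
    and tau_notin: "\<tau> \<notin> Fq"
    and t0: "t0 \<in> Fq" and t1: "t1 \<in> Fq"
    and tau_root: "\<tau> ^ 2 = t1 * \<tau> + t0"
begin

lemma basis_decomposition: "\<exists>!p. fst p \<in> Fq \<and> snd p \<in> Fq \<and> c = fst p + snd p * \<tau>"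
proof -
  define \<phi> where "\<phi> = (\<lambda>p::'k \<times> 'k. fst p + snd p * \<tau>)"
  have inj: "inj_on \<phi> (Fq \<times> Fq)"
  proof (rule inj_onI)
    fix p r assume p: "p \<in> Fq \<times> Fq" and r: "r \<in> Fq \<times> Fq" and eq: "\<phi> p = \<phi> r"
    show "p = r"
    proof (cases "snd p = snd r")
      case True thus ?thesis using eq by (simp add: \<phi>_def prod_eq_iff)
    next
      case False
      have "\<tau> = (fst r - fst p) / (snd p - snd r)"
        using eq False by (simp add: \<phi>_def field_simps)
      moreover have "(fst r - fst p) / (snd p - snd r) \<in> Fq"
        using p r by (intro subfield_divide subfield_diff subfield) auto
      ultimately show ?thesis using tau_notin by simp
    qed
  qed
  hence "card (\<phi> ` (Fq \<times> Fq)) = card (UNIV :: 'k set)"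
    using card_square by (simp add: card_image card_cartesian_product power2_eq_square)
  hence "\<phi> ` (Fq \<times> Fq) = UNIV" by (simp add: card_subset_eq)
  then obtain p where "p \<in> Fq \<times> Fq" "c = \<phi> p" by (metis UNIV_I imageE)
  with inj show ?thesis unfolding \<phi>_def inj_on_def by (metis mem_Times_iff)
qed

lemma bcoords_correct:
  "fst (bcoords Fq \<tau> c) \<in> Fq \<and> snd (bcoords Fq \<tau> c) \<in> Fq
   \<and> c = fst (bcoords Fq \<tau> c) + snd (bcoords Fq \<tau> c) * \<tau>"
  unfolding bcoords_def by (rule theI'[OF basis_decomposition])

lemma bb_recombine_tau:
  "bb_recombine Fq \<tau> t0 t1 C \<tau> (x0, x1, y0, y1, z) = conic_eval C (x0 + \<tau> * x1) (y0 + \<tau> * y1) z"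
proof -
  have "teval \<tau> (bcoords Fq \<tau> c) = c" for c
    using bcoords_correct[of c] by (simp add: teval_def mult.commute)
  thus ?thesis
    by (cases C) (simp add: bb_recombine_conic_eval[OF tau_root] map_conic_def)
qed

lemma bb_split_in_subfield:
  assumes "P \<in> Fq \<times> Fq \<times> Fq \<times> Fq \<times> Fq"
  shows "f_inf Fq \<tau> t0 t1 C P \<in> Fq \<and> f_0 Fq \<tau> t0 t1 C P \<in> Fq"
proof -
  have mul: "tmul t0 t1 p r \<in> Fq \<times> Fq" and add: "tadd p r \<in> Fq \<times> Fq"
    if "p \<in> Fq \<times> Fq" "r \<in> Fq \<times> Fq" for p r
    using that subfield t0 t1 by (auto simp: tmul_def tadd_def is_subfield_def)
  have "bcoords Fq \<tau> c \<in> Fq \<times> Fq" for c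
    using bcoords_correct by (simp add: mem_Times_iff)
  moreover have "0 \<in> Fq" using subfield by (simp add: is_subfield_def)
  ultimately have "bb_split Fq \<tau> t0 t1 C P \<in> Fq \<times> Fq"
    using assms unfolding bb_split_def Let_def
    by (auto split: prod.split intro!: mul add)
  thus ?thesis by (simp add: f_inf_def f_0_def mem_Times_iff)
qed

lemma spread_base_in_subfield:
  "fst (spread_gens Fq \<tau> t0 t1 l1 l2) \<in> Fq \<times> Fq \<times> Fq \<times> Fq \<times> Fq"
  using subfield bcoords_correct[of "l1 / l2"]
  by (auto simp: spread_gens_def is_subfield_def split: prod.split)

lemma bb_recombine_spread_base_nonzero:
  assumes "(l1, l2) \<noteq> (0, 0)" and "conic_eval C l1 l2 0 \<noteq> 0"
  shows "bb_recombine Fq \<tau> t0 t1 C \<tau> (fst (spread_gens Fq \<tau> t0 t1 l1 l2)) \<noteq> 0"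
proof (cases "l2 = 0")
  case True
  have "conic_eval C l1 l2 0 = l1 ^ 2 * conic_eval C 1 0 0"
    using True conic_eval_homogeneous[of C l1 1 0 0] by simp
  thus ?thesis using assms True by (simp add: spread_gens_def bb_recombine_tau)
next
  case False
  obtain d0 d1 where d: "bcoords Fq \<tau> (l1 / l2) = (d0, d1)" by fastforce
  hence "l1 = (d0 + \<tau> * d1) * l2"
    using bcoords_correct[of "l1 / l2"] False by (simp add: field_simps)
  hence "conic_eval C l1 l2 0 = l2 ^ 2 * conic_eval C (d0 + \<tau> * d1) 1 0"
    using conic_eval_homogeneous[of C l2 "d0 + \<tau> * d1" 1 0] by (simp add: mult.commute)
  thus ?thesis using assms False d by (simp add: spread_gens_def bb_recombine_tau)
qed

lemma conjugate_nonzero: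
  assumes "a \<in> Fq" "b \<in> Fq" and "a + \<tau> * b \<noteq> 0"
  shows "a + (t1 - \<tau>) * b \<noteq> 0"
proof
  assume conj: "a + (t1 - \<tau>) * b = 0"
  with assms(3) have "b \<noteq> 0" by auto
  hence "\<tau> = (a + t1 * b) / b" using conj by (simp add: field_simps)
  moreover have "(a + t1 * b) / b \<in> Fq"
    using assms t1 subfield by (intro subfield_divide) (auto simp: is_subfield_def)
  ultimately show False using tau_notin by simp
qed

lemma tau_ne_conjugate: "\<tau> \<noteq> t1 - \<tau>"
proof
  assume "\<tau> = t1 - \<tau>"
  hence trace: "t1 = 2 * \<tau>" by simp
  show False
  proof (cases "(2::'k) = 0")
    case False
    have "(2::'k) \<in> Fq" using subfield unfolding is_subfield_def one_add_one[symmetric] by blast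
    hence "t1 / 2 \<in> Fq" by (rule subfield_divide[OF subfield t1])
    moreover have "\<tau> = t1 / 2" using trace False by (simp add: field_simps)
    ultimately show False using tau_notin by metis
  next
    case True
    obtain c where c: "c \<in> Fq" "c ^ 2 = t0"
      using subfield_square_char_2[OF subfield finite True t0] by blast
    have "(\<tau> - c) ^ 2 = 2 * (\<tau> * \<tau> - c * (\<tau> - c))"
      using tau_root trace c(2) by (simp add: algebra_simps power2_eq_square)
    also have "\<dots> = 0" by (simp only: True mult_zero_left)
    finally show False using c(1) tau_notin by simp
  qed
qed

end

theorem corollary4p4:
  fixes Fq :: "'k::{field,finite} set" and \<tau> t0 t1 l1 l2 :: 'k and C :: "'k conic"
  assumes "is_subfield Fq"
    and "card (UNIV :: 'k set) = (card Fq)^2"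
    and "\<forall>x::'k. x \<noteq> 0 \<longrightarrow> (\<exists>n::nat. x = \<tau>^n)"
    and "t0 \<in> Fq" and "t1 \<in> Fq" and "\<tau>^2 = t1*\<tau> + t0"
    and "nondegenerate_conic C"
    and "(l1, l2) \<noteq> (0, 0)"
    and "conic_eval C l1 l2 0 \<noteq> 0"
  shows "\<forall>P \<in> ext_spread_line Fq \<tau> t0 t1 l1 l2.
           \<not> (f_inf Fq \<tau> t0 t1 C P = 0 \<and> f_0 Fq \<tau> t0 t1 C P = 0)"
proof (intro ballI notI)
  interpret quadratic_subfield Fq \<tau> t0 t1
    using assms primitive_element_not_in_subfield by unfold_locales auto
  fix P assume P: "P \<in> ext_spread_line Fq \<tau> t0 t1 l1 l2"
    and zero: "f_inf Fq \<tau> t0 t1 C P = 0 \<and> f_0 Fq \<tau> t0 t1 C P = 0"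
  let ?Q = "fst (spread_gens Fq \<tau> t0 t1 l1 l2)"
  obtain s r where sr: "(s, r) \<noteq> (0, 0)" and scale: "\<And>\<rho>. \<rho> ^ 2 = t1 * \<rho> + t0 \<Longrightarrow>
      bb_recombine Fq \<tau> t0 t1 C \<rho> P = (s + \<rho> * r) ^ 2 * bb_recombine Fq \<tau> t0 t1 C \<rho> ?Q"
    using bb_recombine_ext_spread_line[OF P] by blast
  have base: "bb_recombine Fq \<tau> t0 t1 C \<tau> ?Q \<noteq> 0"
    using bb_recombine_spread_base_nonzero assms(8,9) by blast
  hence base_conj: "bb_recombine Fq \<tau> t0 t1 C (t1 - \<tau>) ?Q \<noteq> 0"
    using conjugate_nonzero bb_split_in_subfield[OF spread_base_in_subfield]
    by (simp add: bb_recombine_def)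
  have root_tau: "s + \<tau> * r = 0" and root_conj: "s + (t1 - \<tau>) * r = 0"
    using scale[OF tau_root] scale[OF conjugate_root[OF tau_root]] base base_conj zero
    by (simp_all add: bb_recombine_def)
  have "r * (\<tau> - (t1 - \<tau>)) = (s + \<tau> * r) - (s + (t1 - \<tau>) * r)"
    by (simp add: algebra_simps)
  hence "r * (\<tau> - (t1 - \<tau>)) = 0" unfolding root_tau root_conj by simp
  thus False using sr tau_ne_conjugate root_tau by auto
qed

end
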